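(* Let $\lambda>1$ and $g_\lambda(x)=\frac{x^{\lambda}\Gamma(x)}{\Gamma(\lambda+x)}$, $x>0$. Then $g_\lambda\in\mathcal B_{\lambda-1}$, and $g_\lambda\notin\mathcal B_\tau$ for every $\tau\in(0,\lambda-1)$.
   Context: For $\tau>0$, $\mathcal B_\tau$ is the class of non-negative functions $f$ on $(0,\infty)$ having derivatives of all orders such that $x\mapsto f'(x)x^{1-\tau}$ is completely monotonic on $(0,\infty)$. *)

theory Defs
  imports "HOL-Analysis.Analysis"
begin

definition has_derivs_on :: "(real \<Rightarrow> real) \<Rightarrow> (nat \<Rightarrow> real \<Rightarrow> real) \<Rightarrow> real set \<Rightarrow> bool" where
  "has_derivs_on f D S \<longleftrightarrow>
     (\<forall>x\<in>S. D 0 x = f x) \<and>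
     (\<forall>n. \<forall>x\<in>S. (D n has_real_derivative D (Suc n) x) (at x))"

definition smooth_on :: "(real \<Rightarrow> real) \<Rightarrow> real set \<Rightarrow> bool" where
  "smooth_on f S \<longleftrightarrow> (\<exists>D. has_derivs_on f D S)"

definition completely_monotonic_on :: "(real \<Rightarrow> real) \<Rightarrow> real set \<Rightarrow> bool" where
  "completely_monotonic_on f S \<longleftrightarrow>
     (\<exists>D. has_derivs_on f D S \<and> (\<forall>n. \<forall>x\<in>S. (-1) ^ n * D n x \<ge> 0))"

definition class_B :: "real \<Rightarrow> (real \<Rightarrow> real) \<Rightarrow> bool" where
  "class_B \<tau> f \<longleftrightarrow>
     (\<forall>x>0. f x \<ge> 0) \<and> smooth_on f {0<..} \<and>
     completely_monotonic_on (\<lambda>x. deriv f x * x powr (1 - \<tau>)) {0<..}"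

definition g_lambda :: "real \<Rightarrow> real \<Rightarrow> real" where
  "g_lambda lam x = x powr lam * Gamma x / Gamma (lam + x)"

end

(* Write mu = lam - 1.  Since Gamma (x + 1) / Gamma (x + lam) = Beta (x + 1) mu / Gamma mu,
   g x = x^mu / Gamma mu * (INT t:0..1. t^x (1 - t)^(mu - 1)).  Differentiating under the integral
   and integrating by parts gives x^(1 - mu) g' x = (INT t:0..1. t^x V t) / Gamma mu with a weight
   V >= 0 on (0, 1); the n-th derivative of the right-hand side is (INT t:0..1. t^x (ln t)^n V t) / Gamma mu,
   whose sign is (-1)^n, so g lies in B_(lam - 1).
   Conversely, if f lies in B_tau then x^(1 - tau) f' x is nonincreasing, so as soon as f increases
   somewhere, f' x >= c x^(tau - 1) and hence f x >= c' x^tau near 0.  This is incompatible with the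
   bound g x <= x^mu / Gamma lam when tau < mu. *)

theory Submission
  imports Defs "HOL-Complex_Analysis.Cauchy_Integral_Formula"
begin

lemma abs_exp_minus_linear_le:
  fixes y :: real
  shows "\<bar>exp y - 1 - y\<bar> \<le> y\<^sup>2 * exp \<bar>y\<bar> / 2"
proof -
  obtain s where s: "\<bar>s\<bar> \<le> \<bar>y\<bar>" "exp y = (\<Sum>m<2. y ^ m / fact m) + exp s / fact 2 * y\<^sup>2"
    using Maclaurin_exp_le[of y 2] by blast
  have "\<bar>exp y - 1 - y\<bar> = exp s / 2 * y\<^sup>2"
    using s(2) by (simp add: numeral_2_eq_2)
  also have "\<dots> \<le> exp \<bar>y\<bar> / 2 * y\<^sup>2"
    using s(1) by (intro mult_right_mono divide_right_mono) auto
  finally show ?thesis by (simp add: mult_ac)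
qed

lemma abs_powr_minus_linear_le:
  fixes t x h :: real
  assumes t: "0 < t" "t < 1" and "0 < x" and h: "\<bar>h\<bar> \<le> x / 2"
  shows "\<bar>t powr (x + h) - t powr x - h * ln t * t powr x\<bar> \<le> h\<^sup>2 * (ln t)\<^sup>2 * t powr (x / 2)"
proof -
  have "t powr (x + h) = t powr x * exp (h * ln t)"
    using t by (simp add: powr_def algebra_simps flip: exp_add)
  then have "t powr (x + h) - t powr x - h * ln t * t powr x = t powr x * (exp (h * ln t) - 1 - h * ln t)"
    by (simp add: algebra_simps)
  then have "\<bar>t powr (x + h) - t powr x - h * ln t * t powr x\<bar> = t powr x * \<bar>exp (h * ln t) - 1 - h * ln t\<bar>"
    by (simp add: abs_mult)
  also have "\<dots> \<le> t powr x * ((h * ln t)\<^sup>2 * exp \<bar>h * ln t\<bar> / 2)"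
    by (intro mult_left_mono abs_exp_minus_linear_le) auto
  also have "exp \<bar>h * ln t\<bar> = t powr (- \<bar>h\<bar>)"
    using t by (simp add: powr_def abs_mult)
  also have "t powr x * ((h * ln t)\<^sup>2 * t powr (- \<bar>h\<bar>) / 2) = (h * ln t)\<^sup>2 * t powr (x - \<bar>h\<bar>) / 2"
    by (simp add: powr_diff powr_minus field_simps)
  also have "\<dots> \<le> (h * ln t)\<^sup>2 * t powr (x - \<bar>h\<bar>)"
    by simp
  also have "\<dots> \<le> (h * ln t)\<^sup>2 * t powr (x / 2)"
    using t h by (intro mult_left_mono powr_mono') auto
  finally show ?thesis by (simp add: power_mult_distrib)
qed

lemma powr_mult_abs_ln_power_le:
  fixes t a :: real
  assumes t: "0 < t" "t < 1" and a: "0 < a"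
  shows "t powr a * \<bar>ln t\<bar> ^ m \<le> (real m / a) ^ m"
proof (cases "m = 0")
  case True
  then show ?thesis using t a powr_mono'[of 0 a t] by simp
next
  case False
  define c where "c = a / real m"
  have c: "c > 0" using False a by (simp add: c_def)
  have "ln (t powr (- c)) \<le> t powr (- c) - 1"
    using t by (intro ln_le_minus_one) auto
  then have "\<bar>ln t\<bar> \<le> t powr (- c) / c"
    using t c by (simp add: ln_powr field_simps abs_if)
  then have "\<bar>ln t\<bar> ^ m \<le> (t powr (- c) / c) ^ m"
    by (intro power_mono) auto
  also have "\<dots> = (t powr (- c)) powr (real m) / c ^ m"
    using t by (simp add: power_divide powr_realpow)
  also have "\<dots> = t powr (- a) / c ^ m"
    using False by (simp add: powr_powr c_def)
  finally have "t powr a * \<bar>ln t\<bar> ^ m \<le> t powr a * (t powr (- a) / c ^ m)"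
    by (intro mult_left_mono) auto
  also have "\<dots> = (real m / a) ^ m"
    using t c by (simp add: powr_minus c_def power_divide field_simps)
  finally show ?thesis .
qed

lemma abs_mult_ln_le:
  fixes t :: real
  assumes "0 < t" "t < 1"
  shows "\<bar>t * ln t\<bar> \<le> 1 - t"
proof -
  have "ln (1 / t) \<le> 1 / t - 1"
    using assms by (intro ln_le_minus_one) auto
  then show ?thesis
    using assms by (simp add: ln_div abs_if mult_less_0_iff field_simps)
qed

section \<open>Logarithmic moments of weights on (0, 1)\<close>

definition log_moment :: "(real \<Rightarrow> real) \<Rightarrow> nat \<Rightarrow> real \<Rightarrow> real" where
  "log_moment w n x = integral {0<..<1} (\<lambda>t. t powr x * ln t ^ n * w t)"

definition log_moments_integrable :: "(real \<Rightarrow> real) \<Rightarrow> bool" where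
  "log_moments_integrable w \<longleftrightarrow>
     (\<forall>a>0. \<forall>m. (\<lambda>t. t powr a * ln t ^ m * w t) absolutely_integrable_on {0<..<1})"

lemma log_moments_integrableD:
  assumes "log_moments_integrable w" "0 < a"
  shows "(\<lambda>t. t powr a * ln t ^ m * w t) integrable_on {0<..<1}"
    and "(\<lambda>t. \<bar>t powr a * ln t ^ m * w t\<bar>) integrable_on {0<..<1}"
  using assms unfolding log_moments_integrable_def absolutely_integrable_on_def by auto

lemma log_moment_linearization_le:
  assumes w: "log_moments_integrable w" and x: "0 < x" and h: "\<bar>h\<bar> \<le> x / 2"
  shows "\<bar>log_moment w n (x + h) - log_moment w n x - h * log_moment w (Suc n) x\<bar>
           \<le> h\<^sup>2 * integral {0<..<1} (\<lambda>t. \<bar>t powr (x / 2) * ln t ^ (n + 2) * w t\<bar>)"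
proof -
  let ?S = "{0<..<1::real}"
  let ?f = "\<lambda>y t. t powr y * ln t ^ n * w t"
  let ?f' = "\<lambda>t. t powr x * ln t ^ Suc n * w t"
  let ?b = "\<lambda>t. h\<^sup>2 * \<bar>t powr (x / 2) * ln t ^ (n + 2) * w t\<bar>"
  have xh: "0 < x + h" using x h by linarith
  have int: "?f (x + h) integrable_on ?S" "?f x integrable_on ?S" "?f' integrable_on ?S"
    "?b integrable_on ?S"
  proof -
    show "?f (x + h) integrable_on ?S" by (rule log_moments_integrableD(1)[OF w xh])
    show "?f x integrable_on ?S" "?f' integrable_on ?S" by (rule log_moments_integrableD(1)[OF w x])+
    show "?b integrable_on ?S"
      using x by (intro integrable_on_mult_right log_moments_integrableD(2)[OF w]) simp
  qed
  have bound: "norm (?f (x + h) t - ?f x t - h * ?f' t) \<le> ?b t" if t: "t \<in> ?S" for t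
  proof -
    have "?f (x + h) t - ?f x t - h * ?f' t
            = (ln t ^ n * w t) * (t powr (x + h) - t powr x - h * ln t * t powr x)"
      by (simp add: algebra_simps)
    then have "\<bar>?f (x + h) t - ?f x t - h * ?f' t\<bar>
            = \<bar>ln t ^ n * w t\<bar> * \<bar>t powr (x + h) - t powr x - h * ln t * t powr x\<bar>"
      by (simp only: abs_mult)
    also have "\<dots> \<le> \<bar>ln t ^ n * w t\<bar> * (h\<^sup>2 * (ln t)\<^sup>2 * t powr (x / 2))"
      using t x h by (intro mult_left_mono abs_powr_minus_linear_le) auto
    also have "\<dots> = ?b t"
      by (simp add: abs_mult power_add algebra_simps power2_eq_square)
    finally show ?thesis by simp
  qed
  have diff: "((\<lambda>t. ?f (x + h) t - ?f x t - h * ?f' t) has_integral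
                 log_moment w n (x + h) - log_moment w n x - h * log_moment w (Suc n) x) ?S"
    unfolding log_moment_def
    by (intro has_integral_diff has_integral_mult_right integrable_integral int(1-3))
  show ?thesis
    using integral_norm_bound_integral[OF has_integral_integrable[OF diff] int(4) bound]
    unfolding integral_unique[OF diff] by simp
qed

lemma has_real_derivative_log_moment:
  assumes w: "log_moments_integrable w" and x: "0 < x"
  shows "(log_moment w n has_real_derivative log_moment w (Suc n) x) (at x)"
proof -
  define K where "K = integral {0<..<1} (\<lambda>t. \<bar>t powr (x / 2) * ln t ^ (n + 2) * w t\<bar>)"
  have "\<forall>\<^sub>F h in at 0. norm ((log_moment w n (x + h) - log_moment w n x) / h - log_moment w (Suc n) x)
                        \<le> \<bar>h\<bar> * K"
    unfolding eventually_at
  proof (intro exI[of _ "x / 2"] conjI allI impI ballI)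
    fix h :: real assume h: "h \<noteq> 0 \<and> dist h 0 < x / 2"
    have "norm ((log_moment w n (x + h) - log_moment w n x) / h - log_moment w (Suc n) x)
            = \<bar>log_moment w n (x + h) - log_moment w n x - h * log_moment w (Suc n) x\<bar> / \<bar>h\<bar>"
      using h by (simp add: field_simps)
    also have "\<dots> \<le> h\<^sup>2 * K / \<bar>h\<bar>"
      using log_moment_linearization_le[OF w x, of h n] h by (intro divide_right_mono) (auto simp: K_def)
    also have "\<dots> = \<bar>h\<bar> * K"
      using h by (simp add: power2_eq_square field_simps)
    finally show "norm ((log_moment w n (x + h) - log_moment w n x) / h - log_moment w (Suc n) x)
                    \<le> \<bar>h\<bar> * K" .
  qed (use x in simp)
  moreover have "((\<lambda>h. \<bar>h\<bar> * K) \<longlongrightarrow> 0) (at (0::real))"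
    by (auto intro!: tendsto_eq_intros)
  ultimately have "((\<lambda>h. (log_moment w n (x + h) - log_moment w n x) / h) \<longlongrightarrow> log_moment w (Suc n) x) (at 0)"
    by (rule LIM_zero_cancel[OF Lim_null_comparison])
  then show ?thesis
    by (simp add: DERIV_def)
qed

lemma integrable_on_one_minus_powr:
  fixes mu :: real
  assumes "0 < mu"
  shows "(\<lambda>t. (1 - t) powr (mu - 1)) integrable_on {0<..<1}"
proof -
  have "((\<lambda>t. t powr (1 - 1) * (1 - t) powr (mu - 1)) has_integral Beta 1 mu) {0<..<1}"
    using has_integral_Beta_real[of 1 mu] assms by (simp add: has_integral_Icc_iff_Ioo)
  then have "((\<lambda>t. (1 - t) powr (mu - 1)) has_integral Beta 1 mu) {0<..<1}"
    by (rule has_integral_cong[THEN iffD1, rotated]) simp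
  then show ?thesis
    by blast
qed

lemma log_moments_integrable_if_bounded:
  fixes w :: "real \<Rightarrow> real"
  assumes mu: "0 < mu" and cont: "continuous_on {0<..<1} w"
    and bound: "\<And>t. 0 < t \<Longrightarrow> t < 1 \<Longrightarrow> \<bar>w t\<bar> \<le> C * (1 - t) powr (mu - 1) * (1 - ln t)"
  shows "log_moments_integrable w"
  unfolding log_moments_integrable_def
proof (intro allI impI)
  fix a :: real and m :: nat
  assume a: "0 < a"
  define K where "K = \<bar>C\<bar> * ((real m / a) ^ m + (real (Suc m) / a) ^ Suc m)"
  show "(\<lambda>t. t powr a * ln t ^ m * w t) absolutely_integrable_on {0<..<1}"
  proof (rule measurable_bounded_by_integrable_imp_absolutely_integrable)
    show "(\<lambda>t. t powr a * ln t ^ m * w t) \<in> borel_measurable (lebesgue_on {0<..<1})"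
      using cont by (intro continuous_imp_measurable_on_sets_lebesgue continuous_intros) auto
    show "(\<lambda>t. K * (1 - t) powr (mu - 1)) integrable_on {0<..<1}"
      using integrable_on_one_minus_powr[OF mu] by (rule integrable_on_mult_right)
    fix t :: real
    assume t: "t \<in> {0<..<1}"
    let ?P = "(1 - t) powr (mu - 1)"
    have "1 - ln t = 1 + \<bar>ln t\<bar>"
      using t by simp
    then have "\<bar>w t\<bar> \<le> C * (?P * (1 + \<bar>ln t\<bar>))"
      using t bound[of t] by (simp add: mult.assoc)
    also have "\<dots> \<le> \<bar>C\<bar> * (?P * (1 + \<bar>ln t\<bar>))"
      by (intro mult_right_mono) auto
    finally have w_le: "\<bar>w t\<bar> \<le> \<bar>C\<bar> * (?P * (1 + \<bar>ln t\<bar>))" .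
    have "norm (t powr a * ln t ^ m * w t) = t powr a * \<bar>ln t\<bar> ^ m * \<bar>w t\<bar>"
      by (simp add: abs_mult power_abs)
    also have "\<dots> \<le> t powr a * \<bar>ln t\<bar> ^ m * (\<bar>C\<bar> * (?P * (1 + \<bar>ln t\<bar>)))"
      using w_le by (intro mult_left_mono) auto
    also have "\<dots> = \<bar>C\<bar> * ?P * (t powr a * \<bar>ln t\<bar> ^ m + t powr a * \<bar>ln t\<bar> ^ Suc m)"
      by (simp add: algebra_simps)
    also have "\<dots> \<le> \<bar>C\<bar> * ?P * ((real m / a) ^ m + (real (Suc m) / a) ^ Suc m)"
      using t a by (intro mult_left_mono add_mono powr_mult_abs_ln_power_le) auto
    also have "\<dots> = K * ?P"
      by (simp add: K_def)
    finally show "norm (t powr a * ln t ^ m * w t) \<le> K * ?P" .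
  qed auto
qed

lemma completely_monotonic_on_log_moment:
  assumes w: "log_moments_integrable w" and nonneg: "\<And>t. 0 < t \<Longrightarrow> t < 1 \<Longrightarrow> 0 \<le> w t"
  shows "completely_monotonic_on (log_moment w 0) {0<..}"
  unfolding completely_monotonic_on_def has_derivs_on_def
proof (intro exI[of _ "log_moment w"] conjI allI ballI)
  fix n and x :: real
  assume x: "x \<in> {0<..}"
  then show "(log_moment w n has_real_derivative log_moment w (Suc n) x) (at x)"
    by (intro has_real_derivative_log_moment w) simp
  have "(-1) ^ n * log_moment w n x = integral {0<..<1} (\<lambda>t. (-1) ^ n * (t powr x * ln t ^ n * w t))"
    by (simp add: log_moment_def)
  also have "\<dots> \<ge> 0"
  proof (rule integral_nonneg)
    show "(\<lambda>t. (-1) ^ n * (t powr x * ln t ^ n * w t)) integrable_on {0<..<1}"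
      using x by (intro integrable_on_mult_right log_moments_integrableD(1)[OF w]) simp
    fix t :: real
    assume t: "t \<in> {0<..<1}"
    have "(-1) ^ n * (t powr x * ln t ^ n * w t) = t powr x * (- ln t) ^ n * w t"
      by (simp add: power_minus [of "ln t"])
    also have "\<dots> \<ge> 0"
      using t nonneg[of t] by (intro mult_nonneg_nonneg zero_le_power) auto
    finally show "0 \<le> (-1) ^ n * (t powr x * ln t ^ n * w t)" .
  qed
  finally show "0 \<le> (-1) ^ n * log_moment w n x" .
qed simp

section \<open>Complete monotonicity and smoothness\<close>

lemma completely_monotonic_on_cong:
  assumes "\<And>x. x \<in> S \<Longrightarrow> f x = g x" and "completely_monotonic_on f S"
  shows "completely_monotonic_on g S"
  using assms unfolding completely_monotonic_on_def has_derivs_on_def by auto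

lemma completely_monotonic_on_cmult:
  assumes "0 \<le> c" and "completely_monotonic_on f S"
  shows "completely_monotonic_on (\<lambda>x. c * f x) S"
proof -
  obtain D where D: "has_derivs_on f D S" and sign: "\<forall>n. \<forall>x\<in>S. 0 \<le> (-1) ^ n * D n x"
    using assms(2) unfolding completely_monotonic_on_def by blast
  have "has_derivs_on (\<lambda>x. c * f x) (\<lambda>n x. c * D n x) S"
    using D unfolding has_derivs_on_def by (auto intro: DERIV_cmult)
  moreover have "0 \<le> (-1) ^ n * (c * D n x)" if "x \<in> S" for n x
    using sign that assms(1) by (simp add: mult.left_commute)
  ultimately show ?thesis
    unfolding completely_monotonic_on_def by blast
qed

lemma completely_monotonic_on_antimono:
  assumes f: "completely_monotonic_on f S" and "{a..b} \<subseteq> S" and "a \<le> b"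
  shows "f b \<le> f a"
proof -
  obtain D where D: "has_derivs_on f D S" and sign: "\<forall>n. \<forall>x\<in>S. 0 \<le> (-1) ^ n * D n x"
    using f unfolding completely_monotonic_on_def by blast
  have "D 0 b \<le> D 0 a"
  proof (rule DERIV_nonpos_imp_nonincreasing[OF \<open>a \<le> b\<close>])
    fix x assume "a \<le> x" "x \<le> b"
    with \<open>{a..b} \<subseteq> S\<close> have "x \<in> S" by auto
    then have "(D 0 has_real_derivative D (Suc 0) x) (at x)" and "0 \<le> (-1) ^ Suc 0 * D (Suc 0) x"
      using D sign unfolding has_derivs_on_def by blast+
    then show "\<exists>y. (D 0 has_real_derivative y) (at x) \<and> y \<le> 0"
      by auto
  qed
  moreover have "a \<in> S" "b \<in> S"
    using assms(2,3) by auto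
  ultimately show ?thesis
    using D unfolding has_derivs_on_def by simp
qed

lemma smooth_on_imp_has_real_derivative:
  assumes "smooth_on f S" and "open S" and "x \<in> S"
  shows "(f has_real_derivative deriv f x) (at x)"
proof -
  obtain D where D: "has_derivs_on f D S"
    using assms(1) unfolding smooth_on_def by blast
  then have "(D 0 has_real_derivative D 1 x) (at x)"
    using assms(3) unfolding has_derivs_on_def by simp
  then have "(f has_real_derivative D 1 x) (at x)"
    by (rule has_field_derivative_transform_within_open[OF _ assms(2,3)])
       (use D in \<open>simp add: has_derivs_on_def\<close>)
  then show ?thesis
    by (metis DERIV_imp_deriv)
qed

lemma smooth_on_if_holomorphic_extension:
  fixes F :: "complex \<Rightarrow> complex" and f :: "real \<Rightarrow> real"
  assumes holo: "F holomorphic_on S" and S: "open S"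
    and A: "\<And>x. x \<in> A \<Longrightarrow> complex_of_real x \<in> S"
    and F: "\<And>x. x \<in> A \<Longrightarrow> F (of_real x) = of_real (f x)"
  shows "smooth_on f A"
  unfolding smooth_on_def has_derivs_on_def
proof (intro exI[of _ "\<lambda>n x. Re ((deriv ^^ n) F (of_real x))"] conjI allI ballI)
  fix x assume x: "x \<in> A"
  show "Re ((deriv ^^ 0) F (of_real x)) = f x"
    using F[OF x] by simp
  fix n
  have "(deriv ^^ n) F field_differentiable (at (of_real x))"
    using holomorphic_higher_deriv[OF holo S] S A[OF x] by (rule holomorphic_on_imp_differentiable_at)
  then have "((deriv ^^ n) F has_field_derivative (deriv ^^ Suc n) F (of_real x)) (at (of_real x))"
    by (simp add: DERIV_deriv_iff_field_differentiable)
  then have "((\<lambda>y. (deriv ^^ n) F (of_real y)) has_vector_derivative (deriv ^^ Suc n) F (of_real x)) (at x)"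
    by (rule has_vector_derivative_real_field)
  then have "((\<lambda>y. Re ((deriv ^^ n) F (of_real y)))
               has_derivative (\<lambda>h. Re (h *\<^sub>R (deriv ^^ Suc n) F (of_real x)))) (at x)"
    unfolding has_vector_derivative_def by (rule has_derivative_Re)
  moreover have "(\<lambda>h. Re (h *\<^sub>R (deriv ^^ Suc n) F (of_real x))) = (*) (Re ((deriv ^^ Suc n) F (of_real x)))"
    by (simp add: fun_eq_iff)
  ultimately show "((\<lambda>y. Re ((deriv ^^ n) F (of_real y)))
                      has_real_derivative Re ((deriv ^^ Suc n) F (of_real x))) (at x)"
    by (simp add: has_field_derivative_def)
qed

section \<open>Growth at zero of functions in class B\<close>

lemma DERIV_ge_powr_imp_increment_ge:
  fixes f f' :: "real \<Rightarrow> real"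
  assumes \<tau>: "0 < \<tau>" and y: "0 < y" "y \<le> z"
    and f': "\<And>s. y \<le> s \<Longrightarrow> s \<le> z \<Longrightarrow> (f has_real_derivative f' s) (at s)"
    and f'_ge: "\<And>s. y \<le> s \<Longrightarrow> s \<le> z \<Longrightarrow> c * s powr (\<tau> - 1) \<le> f' s"
  shows "c / \<tau> * (z powr \<tau> - y powr \<tau>) \<le> f z - f y"
proof -
  let ?k = "\<lambda>t. f t - c / \<tau> * t powr \<tau>"
  have "?k y \<le> ?k z"
  proof (rule DERIV_nonneg_imp_nondecreasing[OF \<open>y \<le> z\<close>])
    fix s
    assume s: "y \<le> s" "s \<le> z"
    with y have "(?k has_real_derivative f' s - c / \<tau> * (\<tau> * s powr (\<tau> - 1))) (at s)"
      by (intro DERIV_diff DERIV_cmult has_real_derivative_powr f') auto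
    moreover have "0 \<le> f' s - c / \<tau> * (\<tau> * s powr (\<tau> - 1))"
      using f'_ge[OF s] \<tau> by simp
    ultimately show "\<exists>d. (?k has_real_derivative d) (at s) \<and> 0 \<le> d"
      by blast
  qed
  then show ?thesis
    by (simp add: algebra_simps)
qed

lemma class_B_lower_powr_bound:
  assumes f: "class_B \<tau> f" and \<tau>: "0 < \<tau>" and \<xi>: "0 < \<xi>" "0 < deriv f \<xi>"
  obtains c where "0 < c" "\<And>z. 0 < z \<Longrightarrow> z \<le> \<xi> \<Longrightarrow> c * z powr \<tau> \<le> f z"
proof -
  have f_nonneg: "\<And>x. 0 < x \<Longrightarrow> 0 \<le> f x" and f_smooth: "smooth_on f {0<..}"
    and cm: "completely_monotonic_on (\<lambda>x. deriv f x * x powr (1 - \<tau>)) {0<..}"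
    using f unfolding class_B_def by auto
  define c where "c = deriv f \<xi> * \<xi> powr (1 - \<tau>)"
  have c: "0 < c"
    using \<xi> by (simp add: c_def)
  have deriv_ge: "c * t powr (\<tau> - 1) \<le> deriv f t" if t: "0 < t" "t \<le> \<xi>" for t
  proof -
    have "c \<le> deriv f t * t powr (1 - \<tau>)"
      unfolding c_def using t by (intro completely_monotonic_on_antimono[OF cm]) auto
    then have "c * t powr (\<tau> - 1) \<le> deriv f t * t powr (1 - \<tau>) * t powr (\<tau> - 1)"
      by (intro mult_right_mono) auto
    also have "\<dots> = deriv f t"
      using t by (simp add: mult.assoc flip: powr_add)
    finally show ?thesis .
  qed
  define r :: real where "r = (1 / 2) powr (1 / \<tau>)"
  have "r < (1 / 2) powr 0"
    unfolding r_def using \<tau> by (intro powr_less_mono') auto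
  then have r: "0 < r" "r < 1" "r powr \<tau> = 1 / 2"
    using \<tau> by (auto simp: r_def powr_powr)
  show thesis
  proof (rule that[of "c / (2 * \<tau>)"])
    show "0 < c / (2 * \<tau>)"
      using c \<tau> by simp
    fix z
    assume z: "0 < z" "z \<le> \<xi>"
    have rz: "(r * z) powr \<tau> = z powr \<tau> / 2"
      using r z by (simp add: powr_mult)
    have "c / (2 * \<tau>) * z powr \<tau> = c / \<tau> * (z powr \<tau> - (r * z) powr \<tau>)"
      unfolding rz by (simp add: field_simps)
    also have "\<dots> \<le> f z - f (r * z)"
    proof (rule DERIV_ge_powr_imp_increment_ge[OF \<tau>])
      show "0 < r * z" "r * z \<le> z"
        using r z by auto
      fix s
      assume "r * z \<le> s" "s \<le> z"
      with r z have "0 < s" "s \<le> \<xi>"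
        by (auto intro: order.strict_trans2[of 0 "r * z"])
      then show "(f has_real_derivative deriv f s) (at s)" "c * s powr (\<tau> - 1) \<le> deriv f s"
        by (auto intro: smooth_on_imp_has_real_derivative[OF f_smooth] deriv_ge)
    qed
    also have "\<dots> \<le> f z"
      using r z f_nonneg[of "r * z"] by simp
    finally show "c / (2 * \<tau>) * z powr \<tau> \<le> f z" .
  qed
qed

lemma exists_powr_less:
  fixes M a b e :: real
  assumes "0 < e" "0 < a" "0 < b"
  obtains x where "0 < x" "x < b" "M * x powr e < a"
proof -
  have "((\<lambda>x. x powr e) \<longlongrightarrow> 0) (at_right (0::real))"
    using \<open>0 < e\<close> by (intro tendsto_zero_powrI tendsto_ident_at tendsto_const)
      (auto simp: eventually_at_filter)
  then have "\<forall>\<^sub>F x in at_right 0. M * x powr e < a"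
    using \<open>0 < a\<close> by (intro order_tendstoD(2)[OF tendsto_mult_right_zero]) auto
  moreover have "\<forall>\<^sub>F x in at_right 0. 0 < x \<and> x < b"
    using \<open>0 < b\<close> eventually_at_right_field by blast
  ultimately have "\<forall>\<^sub>F x in at_right 0. 0 < x \<and> x < b \<and> M * x powr e < a"
    by eventually_elim auto
  then show thesis
    using eventually_happens'[OF trivial_limit_at_right_real] that by blast
qed

lemma not_class_B_if_powr_bounded:
  assumes \<tau>: "0 < \<tau>" "\<tau> < mu" and bound: "\<And>x. 0 < x \<Longrightarrow> f x \<le> M * x powr mu"
    and x0: "0 < x0" "0 < f x0"
  shows "\<not> class_B \<tau> f"
proof
  assume f: "class_B \<tau> f"
  obtain x1 where x1: "0 < x1" "x1 < x0" "M * x1 powr mu < f x0"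
    using exists_powr_less[of mu "f x0" x0 M] \<tau> x0 by auto
  have "\<forall>x. x1 \<le> x \<and> x \<le> x0 \<longrightarrow> (f has_real_derivative deriv f x) (at x)"
    using f x1(1) by (auto simp: class_B_def intro!: smooth_on_imp_has_real_derivative)
  then obtain \<xi> where \<xi>: "x1 < \<xi>" "\<xi> < x0" "f x0 - f x1 = (x0 - x1) * deriv f \<xi>"
    using MVT2[OF x1(2)] by blast
  moreover have "f x1 < f x0"
    using bound[OF x1(1)] x1(3) by linarith
  ultimately have "0 < (x0 - x1) * deriv f \<xi>"
    by simp
  then have "0 < deriv f \<xi>"
    by (rule zero_less_mult_pos) (use x1 in simp)
  then obtain c where c: "0 < c" "\<And>z. 0 < z \<Longrightarrow> z \<le> \<xi> \<Longrightarrow> c * z powr \<tau> \<le> f z"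
    using class_B_lower_powr_bound[OF f \<tau>(1)] x1(1) \<xi>(1) by (metis order.strict_trans)
  obtain z where z: "0 < z" "z < \<xi>" "M * z powr (mu - \<tau>) < c"
    using exists_powr_less[of "mu - \<tau>" c \<xi> M] \<tau> c(1) x1(1) \<xi>(1) by auto
  have "c * z powr \<tau> \<le> M * z powr (mu - \<tau>) * z powr \<tau>"
    using c(2)[of z] bound[of z] z by (simp add: mult.assoc flip: powr_add)
  moreover have "M * z powr (mu - \<tau>) * z powr \<tau> < c * z powr \<tau>"
    using z by (intro mult_strict_right_mono) auto
  ultimately show False
    by linarith
qed

section \<open>The function g_lambda\<close>

lemma continuous_within_if_abs_le:
  fixes f B :: "real \<Rightarrow> real"
  assumes "continuous (at a within S) B" and "B a = 0" and "f a = 0"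
    and "\<And>t. t \<in> S \<Longrightarrow> \<bar>f t\<bar> \<le> B t"
  shows "continuous (at a within S) f"
proof -
  have "\<forall>\<^sub>F t in at a within S. norm (f t) \<le> B t"
    using assms(4) by (auto simp: eventually_at_filter)
  moreover have "(B \<longlongrightarrow> 0) (at a within S)"
    using assms(1,2) by (simp add: continuous_within)
  ultimately show ?thesis
    using assms(3) by (simp add: continuous_within Lim_null_comparison)
qed

definition beta_weight :: "real \<Rightarrow> real \<Rightarrow> real" where
  "beta_weight mu t = (1 - t) powr (mu - 1)"

text \<open>\<open>deriv_weight mu = mu * w - (\<lambda>t. t * ln t * w t)'\<close> for the Beta weight \<open>w\<close>, so that
  integrating by parts its moment is \<open>mu \<integral> t\<^sup>x w + x \<integral> t\<^sup>x ln t w\<close>.\<close>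

definition deriv_weight :: "real \<Rightarrow> real \<Rightarrow> real" where
  "deriv_weight mu t = (1 - t) powr (mu - 2) * ((mu - 1) * (1 - t) - ln t * (1 - mu * t))"

lemma log_moment_beta_weight:
  assumes "0 < mu" "0 < x"
  shows "log_moment (beta_weight mu) 0 x = Beta (x + 1) mu"
proof -
  have "((\<lambda>t. t powr (x + 1 - 1) * (1 - t) powr (mu - 1)) has_integral Beta (x + 1) mu) {0<..<1}"
    using has_integral_Beta_real[of "x + 1" mu] assms by (simp add: has_integral_Icc_iff_Ioo)
  then show ?thesis
    unfolding log_moment_def beta_weight_def by (simp add: integral_unique)
qed

lemma log_moments_integrable_beta_weight:
  assumes "0 < mu"
  shows "log_moments_integrable (beta_weight mu)"
proof (rule log_moments_integrable_if_bounded[OF assms, of _ 1])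
  show "continuous_on {0<..<1} (beta_weight mu)"
    unfolding beta_weight_def by (intro continuous_intros) auto
  fix t :: real
  assume "0 < t" "t < 1"
  then have "(1 - t) powr (mu - 1) * 1 \<le> (1 - t) powr (mu - 1) * (1 - ln t)"
    by (intro mult_left_mono) auto
  then show "\<bar>beta_weight mu t\<bar> \<le> 1 * (1 - t) powr (mu - 1) * (1 - ln t)"
    by (simp add: beta_weight_def)
qed

lemma deriv_weight_nonneg:
  assumes t: "0 < t" "t < 1" and mu: "0 \<le> mu"
  shows "0 \<le> deriv_weight mu t"
proof -
  define p where "p s = (mu - 1) * (1 - s) - ln s * (1 - mu * s)" for s
  have "p 1 \<le> p t"
  proof (rule DERIV_nonpos_imp_nonincreasing[of t 1 p])
    fix s
    assume s: "t \<le> s" "s \<le> 1"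
    have "(p has_real_derivative 1 - 1 / s + mu * ln s) (at s)"
      unfolding p_def using s t by (auto intro!: derivative_eq_intros simp: field_simps)
    moreover have "1 - 1 / s \<le> 0" and "mu * ln s \<le> 0"
      using s t mu by (auto simp: mult_nonneg_nonpos)
    then have "1 - 1 / s + mu * ln s \<le> 0"
      by linarith
    ultimately show "\<exists>y. (p has_real_derivative y) (at s) \<and> y \<le> 0"
      by blast
  qed (use t in simp)
  then show ?thesis
    using t unfolding deriv_weight_def by (simp add: p_def)
qed

lemma abs_deriv_weight_le:
  assumes t: "0 < t" "t < 1"
  shows "\<bar>deriv_weight mu t\<bar> \<le> (2 * \<bar>mu - 1\<bar> + 1) * (1 - t) powr (mu - 1) * (1 - ln t)"
proof -
  let ?P = "(1 - t) powr (mu - 1)" and ?Q = "(1 - t) powr (mu - 2)"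
  have PQ: "?P = ?Q * (1 - t)"
    using powr_mult_base[of "1 - t" "mu - 2"] t by (simp add: mult.commute)
  have "deriv_weight mu t = ?P * ((mu - 1) - ln t) + (mu - 1) * (?Q * (t * ln t))"
    unfolding deriv_weight_def PQ by (simp add: algebra_simps)
  also have "\<bar>\<dots>\<bar> \<le> \<bar>?P * ((mu - 1) - ln t)\<bar> + \<bar>(mu - 1) * (?Q * (t * ln t))\<bar>"
    by (rule abs_triangle_ineq)
  also have "\<dots> \<le> ?P * (\<bar>mu - 1\<bar> + \<bar>ln t\<bar>) + \<bar>mu - 1\<bar> * (?Q * (1 - t))"
    using abs_mult_ln_le[OF t] abs_triangle_ineq4[of "mu - 1" "ln t"]
    by (auto simp: abs_mult intro!: add_mono mult_left_mono)
  also have "\<dots> = ?P * (2 * \<bar>mu - 1\<bar> + \<bar>ln t\<bar>)"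
    unfolding PQ by (simp add: algebra_simps)
  also have "\<dots> \<le> ?P * ((2 * \<bar>mu - 1\<bar> + 1) * (1 - ln t))"
  proof (intro mult_left_mono)
    have "ln t < 0"
      using t by simp
    then show "2 * \<bar>mu - 1\<bar> + \<bar>ln t\<bar> \<le> (2 * \<bar>mu - 1\<bar> + 1) * (1 - ln t)"
      using mult_nonneg_nonneg[of "\<bar>mu - 1\<bar>" "- ln t"] by (simp add: algebra_simps abs_of_neg)
  qed simp
  finally show ?thesis
    by (simp add: mult_ac)
qed

lemma log_moments_integrable_deriv_weight:
  assumes "0 < mu"
  shows "log_moments_integrable (deriv_weight mu)"
proof (rule log_moments_integrable_if_bounded[OF assms])
  show "continuous_on {0<..<1} (deriv_weight mu)"
    unfolding deriv_weight_def by (intro continuous_intros) auto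
qed (rule abs_deriv_weight_le)

lemma continuous_on_powr_ln_beta_weight:
  assumes mu: "0 < mu" and x: "0 < x"
  shows "continuous_on {0..1} (\<lambda>t. t powr (x + 1) * ln t * beta_weight mu t)"
  unfolding continuous_on_eq_continuous_within
proof
  let ?F = "\<lambda>t. t powr (x + 1) * ln t * beta_weight mu t"
  let ?B = "\<lambda>t. t powr x * (1 - t) powr mu"
  have B: "continuous_on {0..1} ?B"
    using x mu by (intro continuous_intros continuous_on_powr') auto
  have bound: "\<bar>?F t\<bar> \<le> ?B t" if "t \<in> {0..1}" for t
  proof (cases "t = 0 \<or> t = 1")
    case False
    with that have t: "0 < t" "t < 1"
      by auto
    have "\<bar>?F t\<bar> = t powr x * \<bar>t * ln t\<bar> * (1 - t) powr (mu - 1)"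
      using t by (simp add: beta_weight_def powr_add abs_mult)
    also have "\<dots> \<le> t powr x * (1 - t) * (1 - t) powr (mu - 1)"
      using abs_mult_ln_le[OF t] by (intro mult_left_mono mult_right_mono) auto
    also have "\<dots> = ?B t"
      using powr_mult_base[of "1 - t" "mu - 1"] t by (simp add: mult.assoc)
    finally show ?thesis .
  qed auto
  fix t :: real
  assume t: "t \<in> {0..1}"
  show "continuous (at t within {0..1}) ?F"
  proof (cases "t = 0 \<or> t = 1")
    case True
    show ?thesis
    proof (rule continuous_within_if_abs_le[where B = ?B])
      show "continuous (at t within {0..1}) ?B"
        using B t by (simp add: continuous_on_eq_continuous_within)
    qed (use True x mu bound in auto)
  next
    case False
    with t have "isCont ?F t"
      unfolding beta_weight_def by (intro continuous_intros) auto
    then show ?thesis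
      by (rule continuous_at_imp_continuous_at_within)
  qed
qed

lemma has_real_derivative_powr_ln_beta_weight:
  assumes t: "0 < t" "t < 1"
  shows "((\<lambda>s. s powr (x + 1) * ln s * beta_weight mu s) has_real_derivative
           (x + 1) * t powr x * ln t * beta_weight mu t + t powr x * beta_weight mu t
           - (mu - 1) * t powr (x + 1) * ln t * (1 - t) powr (mu - 2)) (at t)"
proof (rule DERIV_cong)
  show "((\<lambda>s. s powr (x + 1) * ln s * beta_weight mu s) has_real_derivative
          ((x + 1) * t powr (x + 1 - 1) * ln t + t powr (x + 1) * (1 / t)) * (1 - t) powr (mu - 1)
          + t powr (x + 1) * ln t * ((mu - 1) * (1 - t) powr (mu - 1 - 1) * (- 1))) (at t)"
    unfolding beta_weight_def using t
    by (intro derivative_eq_intros DERIV_powr has_real_derivative_powr refl) auto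
  have "t powr (x + 1) * (1 / t) = t powr x"
    using t by (simp add: powr_add)
  then show "((x + 1) * t powr (x + 1 - 1) * ln t + t powr (x + 1) * (1 / t)) * (1 - t) powr (mu - 1)
          + t powr (x + 1) * ln t * ((mu - 1) * (1 - t) powr (mu - 1 - 1) * (- 1))
        = (x + 1) * t powr x * ln t * beta_weight mu t + t powr x * beta_weight mu t
          - (mu - 1) * t powr (x + 1) * ln t * (1 - t) powr (mu - 2)"
    by (simp add: beta_weight_def algebra_simps)
qed

lemma log_moment_deriv_weight:
  assumes mu: "0 < mu" and x: "0 < x"
  shows "log_moment (deriv_weight mu) 0 x
           = mu * log_moment (beta_weight mu) 0 x + x * log_moment (beta_weight mu) 1 x"
proof -
  let ?S = "{0<..<1::real}"
  let ?F' = "\<lambda>t. (x + 1) * t powr x * ln t * beta_weight mu t + t powr x * beta_weight mu t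
                 - (mu - 1) * t powr (x + 1) * ln t * (1 - t) powr (mu - 2)"
  let ?m = "\<lambda>k t. t powr x * ln t ^ k * beta_weight mu t"
  have "(?F' has_integral 1 powr (x + 1) * ln 1 * beta_weight mu 1 - 0 powr (x + 1) * ln 0 * beta_weight mu 0) {0..1}"
    by (rule fundamental_theorem_of_calculus_interior)
      (use continuous_on_powr_ln_beta_weight[OF mu x] has_real_derivative_powr_ln_beta_weight in
        \<open>auto simp: has_real_derivative_iff_has_vector_derivative [symmetric]\<close>)
  then have "(?F' has_integral 0) ?S"
    by (simp add: has_integral_Icc_iff_Ioo)
  moreover have "(?m k has_integral log_moment (beta_weight mu) k x) ?S" for k
    unfolding log_moment_def
    by (rule integrable_integral, rule log_moments_integrableD(1)[OF log_moments_integrable_beta_weight[OF mu] x])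
  ultimately have combined: "((\<lambda>t. mu * ?m 0 t + x * ?m 1 t - ?F' t) has_integral
                      mu * log_moment (beta_weight mu) 0 x + x * log_moment (beta_weight mu) 1 x - 0) ?S"
    by (intro has_integral_diff has_integral_add has_integral_mult_right)
  have pointwise: "mu * ?m 0 t + x * ?m 1 t - ?F' t = t powr x * ln t ^ 0 * deriv_weight mu t"
    if "t \<in> ?S" for t
  proof -
    define P Q where "P = t powr x" and "Q = (1 - t) powr (mu - 2)"
    have PQ: "t powr (x + 1) = P * t" "(1 - t) powr (mu - 1) = Q * (1 - t)"
      using that powr_mult_base[of "1 - t" "mu - 2"] by (simp_all add: P_def Q_def powr_add mult.commute)
    show ?thesis
      unfolding beta_weight_def deriv_weight_def PQ P_def [symmetric] Q_def [symmetric]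
      by (simp add: algebra_simps)
  qed
  have "((\<lambda>t. t powr x * ln t ^ 0 * deriv_weight mu t) has_integral
                      mu * log_moment (beta_weight mu) 0 x + x * log_moment (beta_weight mu) 1 x) ?S"
    using combined unfolding diff_zero
    by (rule has_integral_cong[THEN iffD1, rotated]) (rule pointwise)
  then show ?thesis
    unfolding log_moment_def by (rule integral_unique)
qed

lemma g_lambda_nonneg:
  assumes "0 < x" "0 < lam + x"
  shows "0 \<le> g_lambda lam x"
  using assms unfolding g_lambda_def by (intro divide_nonneg_pos mult_nonneg_nonneg) auto

lemma g_lambda_eq_log_moment:
  assumes lam: "1 < lam" and x: "0 < x"
  shows "g_lambda lam x = x powr (lam - 1) * log_moment (beta_weight (lam - 1)) 0 x / Gamma (lam - 1)"
proof -
  have mu: "0 < lam - 1"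
    using lam by simp
  have "Gamma (x + 1) = x * Gamma x"
    using x by (intro Gamma_plus1) (auto elim!: nonpos_Ints_cases)
  moreover have "x powr lam = x powr (lam - 1) * x"
    using powr_mult_base[of x "lam - 1"] x by (simp add: mult.commute)
  ultimately show ?thesis
    using Gamma_real_pos[OF mu]
    by (simp add: g_lambda_def log_moment_beta_weight[OF mu x] Beta_def add.commute)
qed

lemma g_lambda_le_powr:
  assumes lam: "1 < lam" and x: "0 < x"
  shows "g_lambda lam x \<le> x powr (lam - 1) / Gamma lam"
proof -
  have mu: "0 < lam - 1"
    using lam by simp
  have "log_moment (beta_weight (lam - 1)) 0 x = Beta (x + 1) (lam - 1)"
    by (rule log_moment_beta_weight[OF mu x])
  also have "\<dots> \<le> Beta 1 (lam - 1)"
    using x mu by (intro Beta_real_mono) auto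
  also have "\<dots> = Gamma (lam - 1) / Gamma lam"
    by (simp add: Beta_def)
  finally have beta_le: "log_moment (beta_weight (lam - 1)) 0 x \<le> Gamma (lam - 1) / Gamma lam" .
  have "g_lambda lam x = x powr (lam - 1) * log_moment (beta_weight (lam - 1)) 0 x / Gamma (lam - 1)"
    by (rule g_lambda_eq_log_moment[OF lam x])
  also have "\<dots> \<le> x powr (lam - 1) * (Gamma (lam - 1) / Gamma lam) / Gamma (lam - 1)"
    using beta_le Gamma_real_pos[OF mu] by (intro divide_right_mono mult_left_mono) auto
  also have "\<dots> = x powr (lam - 1) / Gamma lam"
    using Gamma_real_pos[OF mu] by simp
  finally show ?thesis .
qed

lemma deriv_g_lambda_mult_powr:
  assumes lam: "1 < lam" and x: "0 < x"
  shows "deriv (g_lambda lam) x * x powr (1 - (lam - 1))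
           = log_moment (deriv_weight (lam - 1)) 0 x / Gamma (lam - 1)"
proof -
  define mu where "mu = lam - 1"
  have mu: "0 < mu"
    using lam by (simp add: mu_def)
  let ?M = "\<lambda>n y. log_moment (beta_weight mu) n y"
  have "((\<lambda>y. y powr mu * ?M 0 y / Gamma mu) has_real_derivative
          (mu * x powr (mu - 1) * ?M 0 x + ?M (Suc 0) x * x powr mu) / Gamma mu) (at x)"
    using x mu by (intro DERIV_cdivide DERIV_mult has_real_derivative_powr has_real_derivative_log_moment
        log_moments_integrable_beta_weight)
  then have "(g_lambda lam has_real_derivative
               (mu * x powr (mu - 1) * ?M 0 x + ?M 1 x * x powr mu) / Gamma mu) (at x)"
    unfolding One_nat_def by (rule has_field_derivative_transform_within_open[where S = "{0<..}"])
      (use x lam in \<open>auto simp: g_lambda_eq_log_moment mu_def\<close>)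
  then have "deriv (g_lambda lam) x * x powr (1 - mu) = (mu * ?M 0 x + x * ?M 1 x) / Gamma mu"
    using x by (simp add: DERIV_imp_deriv field_simps flip: powr_add)
  then show ?thesis
    using log_moment_deriv_weight[OF mu x] by (simp add: mu_def)
qed

lemma smooth_on_g_lambda: "smooth_on (g_lambda lam) {0<..}"
proof (rule smooth_on_if_holomorphic_extension[where S = "{z. 0 < Re z}"
      and F = "\<lambda>z. z powr (of_real lam) * Gamma z * rGamma (of_real lam + z)"])
  show "open {z. 0 < Re z}"
    by (simp add: open_halfspace_Re_gt)
  show "(\<lambda>z. z powr (of_real lam) * Gamma z * rGamma (of_real lam + z)) holomorphic_on {z. 0 < Re z}"
  proof (intro holomorphic_intros)
    show "z \<notin> \<real>\<^sub>\<le>\<^sub>0" if "z \<in> {z. 0 < Re z}" for z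
      using that by (auto simp: complex_nonpos_Reals_iff)
    show "{z. 0 < Re z} \<inter> \<int>\<^sub>\<le>\<^sub>0 = {}"
      by (auto elim!: nonpos_Ints_cases)
  qed
  fix x :: real
  assume x: "x \<in> {0<..}"
  then show "complex_of_real x \<in> {z. 0 < Re z}"
    by simp
  have "complex_of_real x powr complex_of_real lam = of_real (x powr lam)"
    using x by (simp add: powr_of_real)
  moreover have "rGamma (complex_of_real lam + complex_of_real x) = of_real (rGamma (lam + x))"
    by (metis of_real_add rGamma_complex_of_real)
  ultimately show "complex_of_real x powr complex_of_real lam * Gamma (complex_of_real x) *
      rGamma (complex_of_real lam + complex_of_real x) = complex_of_real (g_lambda lam x)"
    by (simp add: Gamma_complex_of_real g_lambda_def rGamma_inverse_Gamma divide_inverse)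
qed

lemma class_B_g_lambda:
  assumes lam: "1 < lam"
  shows "class_B (lam - 1) (g_lambda lam)"
proof -
  have mu: "0 < lam - 1"
    using lam by simp
  have "completely_monotonic_on (\<lambda>x. inverse (Gamma (lam - 1)) * log_moment (deriv_weight (lam - 1)) 0 x) {0<..}"
    using Gamma_real_pos[OF mu] mu
    by (intro completely_monotonic_on_cmult completely_monotonic_on_log_moment
        log_moments_integrable_deriv_weight deriv_weight_nonneg) auto
  then have "completely_monotonic_on (\<lambda>x. deriv (g_lambda lam) x * x powr (1 - (lam - 1))) {0<..}"
    by (rule completely_monotonic_on_cong[rotated])
      (use deriv_g_lambda_mult_powr[OF lam] in \<open>simp add: divide_inverse mult.commute\<close>)
  then show ?thesis
    using g_lambda_nonneg lam smooth_on_g_lambda unfolding class_B_def by auto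
qed

theorem proposition3p1:
  fixes lam :: real
  assumes "lam > 1"
  shows "class_B (lam - 1) (g_lambda lam) \<and>
         (\<forall>\<tau>. 0 < \<tau> \<and> \<tau> < lam - 1 \<longrightarrow> \<not> class_B \<tau> (g_lambda lam))"
proof (intro conjI allI impI)
  show "class_B (lam - 1) (g_lambda lam)"
    using assms by (rule class_B_g_lambda)
  fix \<tau> :: real
  assume "0 < \<tau> \<and> \<tau> < lam - 1"
  moreover have "0 < g_lambda lam 1"
    using assms by (simp add: g_lambda_def)
  ultimately show "\<not> class_B \<tau> (g_lambda lam)"
    using g_lambda_le_powr[OF assms] by (intro not_class_B_if_powr_bounded[of \<tau> "lam - 1" _ "1 / Gamma lam" 1]) auto
qed

end
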